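(* Let $n\ge 1$ and, for each $j\in\{1,\dots,n\}$, let $(P_j(k))_{k\in\mathbb{N}_0}$ be a probability distribution on the nonnegative integers (the degree distribution of the contact tree $\mathcal{T}_j$) with finite mean $\mathbb{E}(k_j)=\sum_k kP_j(k)$ and finite standard deviation $\sigma(k_j)=\sqrt{\mathbb{E}(k_j^2)-\mathbb{E}(k_j)^2}$, and assume $\sum_{l=1}^n\mathbb{E}(k_l)>0$. Let $T_j\in[0,1]$ be the probability of transmitting the disease along an edge of $\mathcal{T}_j$, and suppose a fraction $Q\in[0,1]$ of all infected individuals is completely isolated and transmits to no one. Then the basic reproduction number $R_0$ (defined in the context) equals $$R_0=(1-Q)\sum_{j=1}^n T_j\left(\mathbb{E}(k_j)\left(1-\frac{1}{\sum_{l=1}^n\mathbb{E}(k_l)}\right)+\frac{\sigma(k_j)^2}{\sum_{l=1}^n\mathbb{E}(k_l)}\right).$$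
   Context: Model: a population's contacts are split into $n$ types; a randomly chosen individual has $k_i$ contacts of type $i$ with probability $\prod_i P_i(k_i)$ (independent types). The ramification distribution (number of further contacts of each type of an individual reached by following a randomly chosen contact) is $$\tilde P(k_1,\dots,k_n)=\frac{\sum_{l=1}^n (k_l+1)P_l(k_l+1)\prod_{i\neq l}P_i(k_i)}{\sum_{l=1}^n\mathbb{E}(k_l)}.$$ For an individual with ramification $(k_1,\dots,k_n)$, the expected number of individuals it infects is $$a_{k_1\dots k_n}=(1-Q)\sum_{m_1=0}^{k_1}\cdots\sum_{m_n=0}^{k_n}(m_1+\dots+m_n)\prod_{i=1}^n\binom{k_i}{m_i}T_i^{m_i}(1-T_i)^{k_i-m_i},$$ and the basic reproduction number is $R_0=\sum_{k_1,\dots,k_n\ge0}\tilde P(k_1,\dots,k_n)\,a_{k_1\dots k_n}$. *)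

theory Defs
  imports "HOL-Analysis.Analysis"
begin

text \<open>Contact types are indexed by 0,...,n-1 (paper: 1,...,n).
  P j k is the probability that an individual has k contacts of type j.
  Degree vectors are extensional functions on {..<n}.\<close>

definition mean_deg :: "(nat \<Rightarrow> nat \<Rightarrow> real) \<Rightarrow> nat \<Rightarrow> real" where
  "mean_deg P j = (\<Sum>k. real k * P j k)"

definition second_moment :: "(nat \<Rightarrow> nat \<Rightarrow> real) \<Rightarrow> nat \<Rightarrow> real" where
  "second_moment P j = (\<Sum>k. (real k)^2 * P j k)"

definition std_dev :: "(nat \<Rightarrow> nat \<Rightarrow> real) \<Rightarrow> nat \<Rightarrow> real" where
  "std_dev P j = sqrt (second_moment P j - (mean_deg P j)^2)"

definition ramification ::
  "nat \<Rightarrow> (nat \<Rightarrow> nat \<Rightarrow> real) \<Rightarrow> (nat \<Rightarrow> nat) \<Rightarrow> real" where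
  "ramification n P k =
     (\<Sum>l<n. real (k l + 1) * P l (k l + 1) * (\<Prod>i\<in>{..<n} - {l}. P i (k i)))
     / (\<Sum>l<n. mean_deg P l)"

definition infected_mean ::
  "nat \<Rightarrow> (nat \<Rightarrow> real) \<Rightarrow> real \<Rightarrow> (nat \<Rightarrow> nat) \<Rightarrow> real" where
  "infected_mean n T Q k =
     (1 - Q) * (\<Sum>m\<in>(\<Pi>\<^sub>E i\<in>{..<n}. {..k i}).
        real (\<Sum>i<n. m i) *
        (\<Prod>i<n. real (k i choose m i) * T i ^ m i * (1 - T i) ^ (k i - m i)))"

definition R0 ::
  "nat \<Rightarrow> (nat \<Rightarrow> nat \<Rightarrow> real) \<Rightarrow> (nat \<Rightarrow> real) \<Rightarrow> real \<Rightarrow> real" where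
  "R0 n P T Q =
     infsum (\<lambda>k. ramification n P k * infected_mean n T Q k) ({..<n} \<rightarrow>\<^sub>E (UNIV :: nat set))"

end

theory Submission
  imports Defs
begin

text \<open>Transmissions along the \<open>k\<^sub>j\<close> further contacts are independent Bernoulli trials, so an
  individual with ramification \<open>k\<close> infects on average \<open>(1 - Q) \<Sigma>\<^sub>j T\<^sub>j k\<^sub>j\<close>, and \<open>R\<^sub>0\<close> is a
  combination of the first moments of the ramification distribution. The \<open>l\<close>-th term of
  its numerator is a product over the types in which only the type-\<open>l\<close> factor is size-biased, so
  its \<open>k\<^sub>j\<close>-moment factorises: it is \<open>E(k\<^sub>l) E(k\<^sub>j)\<close> for \<open>l \<noteq> j\<close> and the factorial moment
  \<open>E(k\<^sub>j\<^sup>2) - E(k\<^sub>j)\<close> for \<open>l = j\<close>. Summing over \<open>l\<close> and using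
  \<open>E(k\<^sub>j\<^sup>2) = \<sigma>(k\<^sub>j)\<^sup>2 + E(k\<^sub>j)\<^sup>2\<close> gives the formula.\<close>

lemma binomial_distribution_sum:
  fixes t :: real
  shows "(\<Sum>x\<le>k. real (k choose x) * t ^ x * (1 - t) ^ (k - x)) = 1"
  using binomial_ring[of t "1 - t" k] by (simp add: mult_ac)

lemma binomial_distribution_mean:
  fixes t :: real
  shows "(\<Sum>x\<le>k. real x * (real (k choose x) * t ^ x * (1 - t) ^ (k - x))) = real k * t"
proof (cases k)
  case 0
  then show ?thesis by simp
next
  case (Suc k')
  have absorb: "real (Suc x) * real (Suc k' choose Suc x) = real (Suc k') * real (k' choose x)" for x
    using Suc_times_binomial[of x k'] by (metis of_nat_mult)
  have "(\<Sum>x\<le>k. real x * (real (k choose x) * t ^ x * (1 - t) ^ (k - x)))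
      = (\<Sum>x\<le>k'. (real (Suc x) * real (Suc k' choose Suc x)) * t * (t ^ x * (1 - t) ^ (k' - x)))"
    unfolding Suc sum.atMost_Suc_shift by (simp add: mult_ac)
  also have "\<dots> = real k * t * (\<Sum>x\<le>k'. real (k' choose x) * t ^ x * (1 - t) ^ (k' - x))"
    unfolding absorb Suc by (simp add: sum_distrib_left mult_ac)
  finally show ?thesis
    by (simp add: binomial_distribution_sum)
qed

lemma sum_PiE_additive_times_prod:
  fixes f b :: "'i \<Rightarrow> 'a \<Rightarrow> 'c :: comm_semiring_1"
  assumes "finite I" and "\<And>i. i \<in> I \<Longrightarrow> finite (A i)"
    and "\<And>i. i \<in> I \<Longrightarrow> (\<Sum>x\<in>A i. b i x) = 1"
  shows "(\<Sum>m\<in>PiE I A. (\<Sum>j\<in>I. f j (m j)) * (\<Prod>i\<in>I. b i (m i)))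
       = (\<Sum>j\<in>I. \<Sum>x\<in>A j. f j x * b j x)"
proof -
  define c where "c j i x = (if i = j then f j x * b j x else b i x)" for j i x
  have "(\<Sum>m\<in>PiE I A. (\<Sum>j\<in>I. f j (m j)) * (\<Prod>i\<in>I. b i (m i)))
      = (\<Sum>m\<in>PiE I A. \<Sum>j\<in>I. \<Prod>i\<in>I. c j i (m i))"
    using \<open>finite I\<close>
    by (intro sum.cong refl) (simp add: c_def sum_distrib_right prod.If_cases Int_absorb1
        Diff_eq[symmetric] prod.remove mult_ac)
  also have "\<dots> = (\<Sum>j\<in>I. \<Prod>i\<in>I. \<Sum>x\<in>A i. c j i x)"
    using assms(1,2) by (subst sum.swap) (simp add: prod_sum_PiE)
  also have "\<dots> = (\<Sum>j\<in>I. \<Prod>i\<in>I. if i = j then (\<Sum>x\<in>A j. f j x * b j x) else 1)"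
    using assms(3) by (intro sum.cong prod.cong refl) (simp add: c_def)
  also have "\<dots> = (\<Sum>j\<in>I. \<Sum>x\<in>A j. f j x * b j x)"
    using assms(1) by (intro sum.cong refl) simp
  finally show ?thesis .
qed

lemma infected_mean_eq: "infected_mean n T Q k = (1 - Q) * (\<Sum>j<n. T j * real (k j))"
proof -
  have "infected_mean n T Q k = (1 - Q) *
      (\<Sum>j<n. \<Sum>x\<le>k j. real x * (real (k j choose x) * T j ^ x * (1 - T j) ^ (k j - x)))"
    unfolding infected_mean_def of_nat_sum
    by (subst sum_PiE_additive_times_prod[where f = "\<lambda>_ x. real x"])
       (simp_all add: binomial_distribution_sum)
  also have "\<dots> = (1 - Q) * (\<Sum>j<n. real (k j) * T j)"
    by (simp only: binomial_distribution_mean)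
  finally show ?thesis
    by (simp add: mult.commute)
qed

lemma has_sum_sum:
  fixes f :: "'i \<Rightarrow> 'a \<Rightarrow> 'b :: topological_comm_monoid_add"
  assumes "finite I" and "\<And>i. i \<in> I \<Longrightarrow> (f i has_sum s i) A"
  shows "((\<lambda>x. \<Sum>i\<in>I. f i x) has_sum (\<Sum>i\<in>I. s i)) A"
  using assms by (induction I rule: finite_induct) (auto intro: has_sum_add)

lemma has_sum_prod_PiE_nonneg:
  fixes f :: "'i \<Rightarrow> 'a :: countable \<Rightarrow> real"
  assumes "finite I" and "\<And>i x. i \<in> I \<Longrightarrow> f i x \<ge> 0"
    and "\<And>i. i \<in> I \<Longrightarrow> (f i has_sum s i) (B i)"
  shows "((\<lambda>g. \<Prod>i\<in>I. f i (g i)) has_sum (\<Prod>i\<in>I. s i)) (PiE I B)"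
proof -
  have abs: "Infinite_Sum.abs_summable_on (f i) (B i)" if "i \<in> I" for i
    using assms(3)[OF that] has_sum_imp_summable summable_on_iff_abs_summable_on_real by blast
  have "Infinite_Set_Sum.abs_summable_on (\<lambda>g. \<Prod>i\<in>I. f i (g i)) (PiE I B)"
    using assms(1) abs_summable_equivalent[THEN iffD1, OF abs]
    by (intro abs_summable_on_prod_PiE) auto
  then have "(\<lambda>g. \<Prod>i\<in>I. f i (g i)) summable_on PiE I B"
    using abs_summable_equivalent abs_summable_summable by blast
  moreover have "(\<Prod>i\<in>I. s i) = (\<Prod>i\<in>I. infsum (f i) (B i))"
    using assms(3) by (intro prod.cong refl) (metis infsumI)
  ultimately show ?thesis
    using infsum_prod_PiE_abs[OF assms(1) abs] by (simp add: has_sum_iff)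
qed

lemma size_biased_sums_mean:
  assumes "summable (\<lambda>k. real k * P j k)"
  shows "(\<lambda>x. real (x + 1) * P j (x + 1)) sums mean_deg P j"
  using sums_Suc_iff[of "\<lambda>k. real k * P j k"] summable_sums[OF assms]
  by (simp add: mean_deg_def)

lemma size_biased_sums_factorial_moment:
  assumes "summable (\<lambda>k. real k * P j k)" and "summable (\<lambda>k. (real k)^2 * P j k)"
  shows "(\<lambda>x. real (x + 1) * P j (x + 1) * real x) sums (second_moment P j - mean_deg P j)"
proof -
  have "(\<lambda>k. (real k)^2 * P j k - real k * P j k) sums (second_moment P j - mean_deg P j)"
    using assms by (intro sums_diff) (simp_all add: summable_sums second_moment_def mean_deg_def)
  then have "(\<lambda>x. (real (x + 1))^2 * P j (x + 1) - real (x + 1) * P j (x + 1))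
      sums (second_moment P j - mean_deg P j)"
    using sums_Suc_iff[of "\<lambda>k. (real k)^2 * P j k - real k * P j k"] by simp
  moreover have "(real (x + 1))^2 * P j (x + 1) - real (x + 1) * P j (x + 1)
      = real (x + 1) * P j (x + 1) * real x" for x
    by (simp add: power2_eq_square algebra_simps)
  ultimately show ?thesis
    by simp
qed

lemma mean_squared_le_second_moment:
  fixes p :: "nat \<Rightarrow> real"
  assumes "\<And>k. p k \<ge> 0" and "p sums 1"
    and "(\<lambda>k. real k * p k) sums E" and "(\<lambda>k. (real k)^2 * p k) sums M"
  shows "E^2 \<le> M"
proof -
  have "(\<lambda>k. (real k)^2 * p k - 2 * E * (real k * p k) + E^2 * p k)
      sums (M - 2 * E * E + E^2 * 1)"
    using assms(2-4) by (intro sums_add sums_diff sums_mult)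
  also have "(\<lambda>k. (real k)^2 * p k - 2 * E * (real k * p k) + E^2 * p k)
      = (\<lambda>k. (real k - E)^2 * p k)"
    by (simp add: fun_eq_iff power2_eq_square algebra_simps)
  finally have deviation: "(\<lambda>k. (real k - E)^2 * p k) sums (M - E^2)"
    by (simp add: power2_eq_square)
  have "0 \<le> M - E^2"
    by (rule sums_le[OF _ sums_zero deviation]) (simp add: assms(1))
  then show ?thesis by simp
qed

lemma std_dev_squared:
  assumes "\<And>k. P j k \<ge> 0" and "(\<lambda>k. P j k) sums 1"
    and "summable (\<lambda>k. real k * P j k)" and "summable (\<lambda>k. (real k)^2 * P j k)"
  shows "(std_dev P j)^2 = second_moment P j - (mean_deg P j)^2"
proof -
  have "(mean_deg P j)^2 \<le> second_moment P j"
    using assms unfolding mean_deg_def second_moment_def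
    by (intro mean_squared_le_second_moment[where p = "P j"]) (simp_all add: summable_sums)
  then show ?thesis
    by (simp add: std_dev_def)
qed

text \<open>The \<open>l\<close>-th term of the numerator of the ramification distribution: \<open>E(k\<^sub>l)\<close> times the
  probability that the individual at the end of a random type-\<open>l\<close> contact has further
  contacts \<open>k\<close>, that is, \<open>k\<^sub>l + 1\<close> contacts of type \<open>l\<close> in total.\<close>
definition ramification_weight ::
  "nat \<Rightarrow> (nat \<Rightarrow> nat \<Rightarrow> real) \<Rightarrow> nat \<Rightarrow> (nat \<Rightarrow> nat) \<Rightarrow> real" where
  "ramification_weight n P l k =
     real (k l + 1) * P l (k l + 1) * (\<Prod>i\<in>{..<n} - {l}. P i (k i))"

lemma ramification_eq:
  "ramification n P k = (\<Sum>l<n. ramification_weight n P l k) / (\<Sum>l<n. mean_deg P l)"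
  by (simp add: ramification_def ramification_weight_def)

lemma ramification_weight_times_degree_eq_prod:
  assumes "l < n" and "j < n"
  shows "ramification_weight n P l k * real (k j) =
    (\<Prod>i<n. (if i = l then real (k i + 1) * P i (k i + 1) else P i (k i))
             * (if i = j then real (k i) else 1))"
  using assms
  by (simp add: ramification_weight_def prod.distrib prod.If_cases Diff_eq[symmetric])

lemma has_sum_ramification_weight_times_degree:
  assumes nonneg: "\<And>i k. i < n \<Longrightarrow> P i k \<ge> 0"
    and prob: "\<And>i. i < n \<Longrightarrow> (\<lambda>k. P i k) sums 1"
    and mean: "\<And>i. i < n \<Longrightarrow> summable (\<lambda>k. real k * P i k)"
    and second: "\<And>i. i < n \<Longrightarrow> summable (\<lambda>k. (real k)^2 * P i k)"
    and "l < n" and "j < n"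
  shows "((\<lambda>k. ramification_weight n P l k * real (k j)) has_sum
      (if l = j then second_moment P j - mean_deg P j else mean_deg P l * mean_deg P j))
      ({..<n} \<rightarrow>\<^sub>E UNIV)"
proof -
  define g where "g i = (\<lambda>x. (if i = l then real (x + 1) * P i (x + 1) else P i x)
                              * (if i = j then real x else 1))" for i
  define s where "s i = (if i = l \<and> i = j then second_moment P i - mean_deg P i
                         else if i = l \<or> i = j then mean_deg P i else 1)" for i
  have "g i sums s i" if "i < n" for i
  proof -
    have "(\<lambda>x. P i x * real x) sums mean_deg P i"
      using mean[OF that] by (simp add: summable_sums mean_deg_def mult.commute)
    then show ?thesis
      using prob[OF that] size_biased_sums_mean[of P i, OF mean[OF that]]
        size_biased_sums_factorial_moment[of P i, OF mean[OF that] second[OF that]]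
      by (cases "i = l"; cases "i = j") (simp_all add: g_def s_def)
  qed
  then have "(g i has_sum s i) UNIV" if "i < n" for i
    using that nonneg by (intro sums_nonneg_imp_has_sum) (auto simp: g_def)
  then have "((\<lambda>k. \<Prod>i<n. g i (k i)) has_sum (\<Prod>i<n. s i)) ({..<n} \<rightarrow>\<^sub>E UNIV)"
    using nonneg by (intro has_sum_prod_PiE_nonneg) (auto simp: g_def)
  moreover have "(\<Prod>i<n. g i (k i)) = ramification_weight n P l k * real (k j)" for k
    by (simp add: g_def ramification_weight_times_degree_eq_prod[OF assms(5,6)])
  moreover have "(\<Prod>i<n. s i) =
      (if l = j then second_moment P j - mean_deg P j else mean_deg P l * mean_deg P j)"
  proof (cases "l = j")
    case True
    then have "(\<Prod>i<n. s i) = (\<Prod>i<n. if i = j then second_moment P j - mean_deg P j else 1)"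
      by (intro prod.cong) (auto simp: s_def)
    then show ?thesis
      using True assms(6) by simp
  next
    case False
    then have "(\<Prod>i<n. s i) =
        (\<Prod>i<n. (if i = l then mean_deg P l else 1) * (if i = j then mean_deg P j else 1))"
      by (intro prod.cong) (auto simp: s_def)
    then show ?thesis
      using False assms(5,6) by (simp add: prod.distrib)
  qed
  ultimately show ?thesis
    by simp
qed

lemma ramification_times_infected_mean:
  "ramification n P k * infected_mean n T Q k = (1 - Q) / (\<Sum>l<n. mean_deg P l) *
     (\<Sum>l<n. \<Sum>j<n. T j * (ramification_weight n P l k * real (k j)))"
proof -
  have "ramification n P k * infected_mean n T Q k = (1 - Q) / (\<Sum>l<n. mean_deg P l) *
      ((\<Sum>l<n. ramification_weight n P l k) * (\<Sum>j<n. T j * real (k j)))"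
    by (simp add: ramification_eq infected_mean_eq)
  then show ?thesis
    by (simp add: sum_product mult_ac)
qed

theorem theorem1p2:
  fixes n :: nat and P :: "nat \<Rightarrow> nat \<Rightarrow> real" and T :: "nat \<Rightarrow> real" and Q :: real
  assumes "n \<ge> 1"
    and "\<And>j k. j < n \<Longrightarrow> P j k \<ge> 0"
    and "\<And>j. j < n \<Longrightarrow> (\<lambda>k. P j k) sums 1"
    and "\<And>j. j < n \<Longrightarrow> summable (\<lambda>k. real k * P j k)"
    and "\<And>j. j < n \<Longrightarrow> summable (\<lambda>k. (real k)^2 * P j k)"
    and "(\<Sum>l<n. mean_deg P l) > 0"
    and "\<And>j. j < n \<Longrightarrow> 0 \<le> T j \<and> T j \<le> 1"
    and "0 \<le> Q" and "Q \<le> 1"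
  shows "R0 n P T Q =
    (1 - Q) * (\<Sum>j<n. T j * (mean_deg P j * (1 - 1 / (\<Sum>l<n. mean_deg P l))
                              + (std_dev P j)^2 / (\<Sum>l<n. mean_deg P l)))"
proof -
  define E where "E = mean_deg P"
  define M where "M = second_moment P"
  define S where "S = (\<Sum>l<n. E l)"
  define C where "C l j = (if l = j then M j - E j else E l * E j)" for l j
  have column: "(\<Sum>l<n. C l j) = S * E j + (M j - E j - (E j)^2)" if "j < n" for j
  proof -
    have "(\<Sum>l<n. C l j) = (\<Sum>l<n. E l * E j + (if l = j then M j - E j - (E j)^2 else 0))"
      by (intro sum.cong) (auto simp: C_def power2_eq_square)
    then show ?thesis
      using that by (simp add: sum.distrib S_def sum_distrib_right)
  qed
  have "((\<lambda>k. ramification n P k * infected_mean n T Q k) has_sum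
      (1 - Q) / S * (\<Sum>l<n. \<Sum>j<n. T j * C l j)) ({..<n} \<rightarrow>\<^sub>E UNIV)"
    unfolding ramification_times_infected_mean C_def E_def M_def S_def using assms(2-5)
    by (intro has_sum_cmult_right has_sum_sum finite_lessThan
        has_sum_ramification_weight_times_degree) auto
  then have "R0 n P T Q = (1 - Q) / S * (\<Sum>l<n. \<Sum>j<n. T j * C l j)"
    by (simp add: R0_def has_sum_iff)
  also have "(\<Sum>l<n. \<Sum>j<n. T j * C l j) = (\<Sum>j<n. T j * (S * E j + (M j - E j - (E j)^2)))"
    unfolding sum.swap[of _ "{..<n}"] sum_distrib_left[symmetric] by (simp add: column)
  also have "(1 - Q) / S * \<dots> =
      (1 - Q) * (\<Sum>j<n. T j * (E j * (1 - 1 / S) + (M j - (E j)^2) / S))"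
    unfolding sum_distrib_left using assms(6)
    by (intro sum.cong refl) (simp add: S_def E_def[symmetric] field_simps)
  finally show ?thesis
    using assms(2-5) by (simp add: std_dev_squared E_def M_def S_def)
qed

end
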